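(* For all integers $k\geq 3$ and $m\geq 1$ there are mutually disjoint combinatorial lines $L_1,\dots,L_m\subseteq[k]^{2m}$ such that the only quasilines $L\subseteq L_1\cup\dots\cup L_m$ are $L_1,\dots,L_m$ themselves.
   Context: A combinatorial line in $[k]^n$ is a set $\{\eta(i)\colon i\in[k]\}$ where, for some partition $[n]=C\cup M$ with $M\neq\emptyset$ and values $u_c\in[k]$ ($c\in C$), $\eta(i)$ has $c$-th coordinate $u_c$ for $c\in C$ and $m$-th coordinate $i$ for $m\in M$. A quasiline in $[k]^n$ is a $k$-element subset $L$ such that for every coordinate the entries of the points of $L$ in that coordinate are either all identical or mutually distinct. *)

theory Defs
  imports "HOL-Library.FuncSet"
begin

definition cube :: "nat \<Rightarrow> nat \<Rightarrow> (nat \<Rightarrow> nat) set" where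
  "cube k n = ({0..<n} \<rightarrow>\<^sub>E {1..k})"

definition comb_line :: "nat \<Rightarrow> nat \<Rightarrow> (nat \<Rightarrow> nat) set \<Rightarrow> bool" where
  "comb_line k n L \<longleftrightarrow>
     (\<exists>M u. M \<subseteq> {0..<n} \<and> M \<noteq> {} \<and> (\<forall>c\<in>{0..<n} - M. u c \<in> {1..k}) \<and>
        L = (\<lambda>i. \<lambda>c\<in>{0..<n}. if c \<in> M then i else u c) ` {1..k})"

definition quasiline :: "nat \<Rightarrow> nat \<Rightarrow> (nat \<Rightarrow> nat) set \<Rightarrow> bool" where
  "quasiline k n L \<longleftrightarrow>
     L \<subseteq> cube k n \<and> card L = k \<and>
     (\<forall>c\<in>{0..<n}. (\<forall>x\<in>L. \<forall>y\<in>L. x c = y c) \<or> inj_on (\<lambda>x. x c) L)"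

end

theory Submission
  imports Defs
begin

text \<open>Line \<open>j\<close> moves the coordinate pair \<open>2j-2, 2j-1\<close> (coordinates are numbered from 0)
  and is fixed to \<open>(1, 2)\<close> on every other pair. Let a quasiline \<open>L\<close> inside the union meet
  line \<open>a\<close> in \<open>p\<close>. Two distinct points of \<open>L\<close> outside line \<open>a\<close> agree on pair \<open>a\<close>, so
  \<open>L\<close> is constant on both of its coordinates, forcing \<open>p\<close> to read \<open>(1, 2)\<close> there, whereas
  the two entries of a point of line \<open>a\<close> on pair \<open>a\<close> coincide. Hence at most one point of
  \<open>L\<close> lies outside any line that \<open>L\<close> meets; if \<open>L\<close> met two lines it would have at most two
  points. So \<open>L\<close> lies in one line and, having \<open>k\<close> points, equals it.\<close>

definition pair_line_point :: "nat \<Rightarrow> nat \<Rightarrow> nat \<Rightarrow> nat \<Rightarrow> nat" where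
  "pair_line_point m j i =
     (\<lambda>c\<in>{0..<2*m}. if c \<in> {2*j-2, 2*j-1} then i else if even c then 1 else 2)"

definition pair_line :: "nat \<Rightarrow> nat \<Rightarrow> nat \<Rightarrow> (nat \<Rightarrow> nat) set" where
  "pair_line k m j = pair_line_point m j ` {1..k}"

lemma comb_line_pair_line:
  assumes "k \<ge> 2" and "j \<in> {1..m}"
  shows "comb_line k (2*m) (pair_line k m j)"
  unfolding comb_line_def
proof (intro exI conjI)
  show "pair_line k m j =
    (\<lambda>i. \<lambda>c\<in>{0..<2*m}. if c \<in> {2*j-2, 2*j-1} then i else if even c then 1 else 2) ` {1..k}"
    by (simp add: pair_line_def pair_line_point_def)
qed (use assms in auto)

lemma finite_pair_line: "finite (pair_line k m j)"
  by (simp add: pair_line_def)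

lemma card_pair_line_le: "card (pair_line k m j) \<le> k"
  unfolding pair_line_def using card_image_le[of "{1..k}"] by simp

lemma pair_line_pair_eq:
  assumes "j \<in> {1..m}" and "x \<in> pair_line k m j"
  shows "x (2*j-2) = x (2*j-1)"
  using assms by (auto simp: pair_line_def pair_line_point_def)

lemma pair_line_other_pair:
  assumes "i \<in> {1..m}" "j \<in> {1..m}" "i \<noteq> j" and "x \<in> pair_line k m i"
  shows "x (2*j-2) = 1" and "x (2*j-1) = 2"
proof -
  from assms(4) obtain v where x: "x = pair_line_point m i v"
    unfolding pair_line_def by auto
  have "2*j-2 \<notin> {2*i-2, 2*i-1}" "2*j-1 \<notin> {2*i-2, 2*i-1}" "2*j-1 < 2*m" "odd (2*j-1)"
    using assms(1-3) by auto
  then show "x (2*j-2) = 1" "x (2*j-1) = 2"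
    unfolding x pair_line_point_def by auto
qed

lemma pair_lines_disjoint:
  assumes "i \<in> {1..m}" "j \<in> {1..m}" "i \<noteq> j"
  shows "pair_line k m i \<inter> pair_line k m j = {}"
proof -
  have "x (2*i-2) \<noteq> x (2*i-1)" if "x \<in> pair_line k m j" for x
    using pair_line_other_pair[OF assms(2,1) assms(3)[symmetric] that] by simp
  then show ?thesis
    using pair_line_pair_eq[OF assms(1)] by blast
qed

lemma quasiline_coord_const:
  assumes "quasiline k n L" "c < n"
    and "x \<in> L" "y \<in> L" "x \<noteq> y" "x c = y c" and "z \<in> L" "w \<in> L"
  shows "z c = w c"
proof -
  have "\<not> inj_on (\<lambda>x. x c) L"
    using assms(3-6) by (auto simp: inj_on_def)
  moreover have "(\<forall>x\<in>L. \<forall>y\<in>L. x c = y c) \<or> inj_on (\<lambda>x. x c) L"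
    using assms(1,2) unfolding quasiline_def by simp
  ultimately show ?thesis
    using assms(7,8) by blast
qed

lemma quasiline_in_pair_lines_one_outside:
  assumes L: "quasiline k (2*m) L" "L \<subseteq> (\<Union>j\<in>{1..m}. pair_line k m j)"
    and a: "a \<in> {1..m}" and p: "p \<in> L" "p \<in> pair_line k m a"
    and q: "q \<in> L" "q \<notin> pair_line k m a"
  shows "L - pair_line k m a \<subseteq> {q}"
proof
  have outside: "x (2*a-2) = 1" "x (2*a-1) = 2" if "x \<in> L" "x \<notin> pair_line k m a" for x
  proof -
    from that L(2) obtain b where b: "b \<in> {1..m}" "x \<in> pair_line k m b" "b \<noteq> a"
      by blast
    show "x (2*a-2) = 1" "x (2*a-1) = 2"
      using pair_line_other_pair[OF b(1) a b(3) b(2)] by simp_all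
  qed
  fix q' assume q': "q' \<in> L - pair_line k m a"
  show "q' \<in> {q}"
  proof (rule ccontr)
    assume "q' \<notin> {q}"
    then have ne: "q \<noteq> q'" by simp
    have coords: "2*a-2 < 2*m" "2*a-1 < 2*m"
      using a by auto
    have "p (2*a-2) = q (2*a-2)"
      using quasiline_coord_const[OF L(1) coords(1) q(1) _ ne _ p(1) q(1)] q' outside[OF q]
        outside[of q'] by simp
    moreover have "p (2*a-1) = q (2*a-1)"
      using quasiline_coord_const[OF L(1) coords(2) q(1) _ ne _ p(1) q(1)] q' outside[OF q]
        outside[of q'] by simp
    ultimately show False
      using pair_line_pair_eq[OF a p(2)] outside[OF q] by simp
  qed
qed

lemma quasiline_in_pair_lines_subset:
  assumes L: "quasiline k (2*m) L" "L \<subseteq> (\<Union>j\<in>{1..m}. pair_line k m j)"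
    and "k \<ge> 3" and a: "a \<in> {1..m}" and p: "p \<in> L" "p \<in> pair_line k m a"
  shows "L \<subseteq> pair_line k m a"
proof (rule ccontr)
  assume "\<not> L \<subseteq> pair_line k m a"
  then obtain q where q: "q \<in> L" "q \<notin> pair_line k m a" by auto
  then obtain b where b: "b \<in> {1..m}" "q \<in> pair_line k m b" using L(2) by auto
  have disj: "pair_line k m a \<inter> pair_line k m b = {}"
    using pair_lines_disjoint[OF a b(1)] q b(2) by auto
  have "L - pair_line k m a \<subseteq> {q}"
    using quasiline_in_pair_lines_one_outside[OF L a p q] .
  moreover have "L - pair_line k m b \<subseteq> {p}"
    using quasiline_in_pair_lines_one_outside[OF L b(1) q(1) b(2) p(1)] disj p(2) by auto
  ultimately have "L \<subseteq> {p, q}"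
    using disj by auto
  then have "card L \<le> card {p, q}"
    by (rule card_mono[rotated]) simp
  also have "\<dots> \<le> 2"
    by (simp add: card_insert_if)
  finally show False
    using L(1) \<open>k \<ge> 3\<close> by (simp add: quasiline_def)
qed

theorem lemma4p2:
  fixes k m :: nat
  assumes "k \<ge> 3" and "m \<ge> 1"
  shows "\<exists>Ls :: nat \<Rightarrow> (nat \<Rightarrow> nat) set.
           (\<forall>j\<in>{1..m}. comb_line k (2 * m) (Ls j)) \<and>
           (\<forall>i\<in>{1..m}. \<forall>j\<in>{1..m}. i \<noteq> j \<longrightarrow> Ls i \<inter> Ls j = {}) \<and>
           (\<forall>L. quasiline k (2 * m) L \<and> L \<subseteq> (\<Union>j\<in>{1..m}. Ls j) \<longrightarrow>
                (\<exists>j\<in>{1..m}. L = Ls j))"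
proof (intro exI[of _ "pair_line k m"] conjI ballI impI allI)
  fix j assume "j \<in> {1..m}"
  then show "comb_line k (2 * m) (pair_line k m j)"
    using comb_line_pair_line \<open>k \<ge> 3\<close> by simp
next
  fix i j assume "i \<in> {1..m}" "j \<in> {1..m}" "i \<noteq> j"
  then show "pair_line k m i \<inter> pair_line k m j = {}"
    by (rule pair_lines_disjoint)
next
  fix L assume L: "quasiline k (2 * m) L \<and> L \<subseteq> (\<Union>j\<in>{1..m}. pair_line k m j)"
  then have card_L: "card L = k"
    by (simp add: quasiline_def)
  with \<open>k \<ge> 3\<close> obtain p where "p \<in> L"
    by (metis card.empty ex_in_conv not_numeral_le_zero)
  with L obtain a where a: "a \<in> {1..m}" "p \<in> pair_line k m a"
    by auto
  have "L \<subseteq> pair_line k m a"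
    using quasiline_in_pair_lines_subset L \<open>k \<ge> 3\<close> a \<open>p \<in> L\<close> by blast
  then have "L = pair_line k m a"
    using card_seteq[OF finite_pair_line] card_pair_line_le card_L by simp
  with a show "\<exists>j\<in>{1..m}. L = pair_line k m j"
    by blast
qed

end
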